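(* Let $p$ be a prime, $a\in\mathbb{Q}_p$, $a\ne0$, with $\sqrt{-a}\in\mathbb{Q}_p$, $A=|a|_p$, and $f(x)=\frac{ax}{x^2+a}$ on $\mathbb{Q}_p$. Let $0<r<\sqrt A$. Then for every closed ball $V_\rho(c)=\{x\in\mathbb{Q}_p:|x-c|_p\le\rho\}$ contained in $S_r(0)=\{x\in\mathbb{Q}_p:|x|_p=r\}$, one has $f(V_\rho(c))=V_\rho(f(c))$. *)

theory Defs
  imports Complex_Main "HOL-Computational_Algebra.Computational_Algebra"
begin

definition rat_padic_abs :: "nat \<Rightarrow> rat \<Rightarrow> real" where
  "rat_padic_abs p q =
     (if q = 0 then 0
      else (case quotient_of q of (n, d) \<Rightarrow>
              real p powr (real (multiplicity (int p) d) - real (multiplicity (int p) n))))"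

text \<open>This characterises Q_p (the completion of Q w.r.t. |.|_p) up to isometric isomorphism.\<close>
definition is_padic_field :: "nat \<Rightarrow> ('a::field_char_0 \<Rightarrow> real) \<Rightarrow> bool" where
  "is_padic_field p N \<longleftrightarrow>
     (\<forall>x. N x \<ge> 0) \<and> (\<forall>x. N x = 0 \<longleftrightarrow> x = 0) \<and>
     (\<forall>x y. N (x * y) = N x * N y) \<and>
     (\<forall>x y. N (x + y) \<le> max (N x) (N y)) \<and>
     (\<forall>q. N (of_rat q) = rat_padic_abs p q) \<and>
     (\<forall>x e. e > 0 \<longrightarrow> (\<exists>q. N (x - of_rat q) < e)) \<and>
     (\<forall>X :: nat \<Rightarrow> 'a. (\<forall>e>0. \<exists>M. \<forall>m\<ge>M. \<forall>n\<ge>M. N (X m - X n) < e) \<longrightarrow>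
        (\<exists>L. \<forall>e>0. \<exists>M. \<forall>n\<ge>M. N (X n - L) < e))"

end

theory Submission
  imports Defs
begin

text \<open>For \<open>|x|, |z| \<le> r < \<surd>A\<close> the ultrametric inequality gives \<open>|x\<^sup>2 + a| = |a - x z| = A\<close>, so
  the identity \<open>f x - f z = a (x - z) (a - x z) / ((x\<^sup>2 + a) (z\<^sup>2 + a))\<close> shows that \<open>f\<close> is an
  isometry of the ball \<open>|x| \<le> r\<close>. It maps this ball onto itself: \<open>f x = y\<close> means
  \<open>x = y + y x\<^sup>2 / a\<close>, and the right-hand side is a contraction of the ball with constant
  \<open>r\<^sup>2 / A\<close>, so completeness provides a solution. An isometry of a ball onto itself maps every
  smaller ball \<open>V\<^sub>\<rho>(c)\<close> onto \<open>V\<^sub>\<rho>(f c)\<close>.\<close>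

locale nonarch_abs =
  fixes N :: "'a::field \<Rightarrow> real"
  assumes N_nonneg: "N x \<ge> 0"
    and N_eq_0_iff: "N x = 0 \<longleftrightarrow> x = 0"
    and N_mult: "N (x * y) = N x * N y"
    and N_add_le_max: "N (x + y) \<le> max (N x) (N y)"
begin

lemma N_zero: "N 0 = 0"
  using N_eq_0_iff by simp

lemma N_one: "N 1 = 1"
  using N_mult[of 1 1] N_eq_0_iff[of 1] by simp

lemma N_minus: "N (- x) = N x"
proof -
  have "N (-1) * N (-1) = 1"
    using N_mult[of "-1" "-1"] N_one by simp
  then have "N (-1) = 1"
    using N_nonneg[of "-1"] by (metis abs_of_nonneg real_sqrt_abs2 real_sqrt_one)
  then show ?thesis
    using N_mult[of "-1" x] by simp
qed

lemma N_diff_commute: "N (x - y) = N (y - x)"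
  using N_minus[of "x - y"] by simp

lemma N_divide: "N (x / y) = N x / N y"
proof (cases "y = 0")
  case False
  then have "N y * N (inverse y) = 1"
    using N_mult[of y "inverse y"] N_one by simp
  then have "N (inverse y) = inverse (N y)"
    by (rule inverse_unique[symmetric])
  then show ?thesis
    by (simp add: divide_inverse N_mult)
qed (simp add: N_zero)

lemma N_power: "N (x ^ n) = N x ^ n"
  by (induction n) (simp_all add: N_one N_mult)

lemma N_mult_le:
  assumes "N x \<le> r" "N z \<le> s"
  shows "N (x * z) \<le> r * s"
proof -
  have "0 \<le> r"
    using assms(1) N_nonneg[of x] by linarith
  then show ?thesis
    using mult_mono[OF assms _ N_nonneg[of z]] by (simp add: N_mult)
qed

lemma N_add_eq_of_less:
  assumes "N x < N y"
  shows "N (x + y) = N y"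
  using N_add_le_max[of x y] N_add_le_max[of "x + y" "- x"] N_minus[of x] assms
  by (auto simp: max_def split: if_splits)

lemma isometry_onto_image_ball:
  assumes maps_to: "\<And>x. N x \<le> r \<Longrightarrow> N (f x) \<le> r"
    and onto: "\<And>y. N y \<le> r \<Longrightarrow> \<exists>x. N x \<le> r \<and> f x = y"
    and iso: "\<And>x z. N x \<le> r \<Longrightarrow> N z \<le> r \<Longrightarrow> N (f x - f z) = N (x - z)"
    and c: "N c \<le> r" and \<rho>: "\<rho> \<le> r"
  shows "f ` {x. N (x - c) \<le> \<rho>} = {y. N (y - f c) \<le> \<rho>}"
proof
  have in_ball: "N (x - c) \<le> \<rho> \<Longrightarrow> N x \<le> r" for x
    using N_add_le_max[of "x - c" c] c \<rho> by simp
  then show "f ` {x. N (x - c) \<le> \<rho>} \<subseteq> {y. N (y - f c) \<le> \<rho>}"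
    using iso c by auto
  show "{y. N (y - f c) \<le> \<rho>} \<subseteq> f ` {x. N (x - c) \<le> \<rho>}"
  proof
    fix y
    assume y: "y \<in> {y. N (y - f c) \<le> \<rho>}"
    then have "N y \<le> r"
      using N_add_le_max[of "y - f c" "f c"] maps_to[OF c] \<rho> by simp
    then obtain x where x: "N x \<le> r" "f x = y"
      using onto by blast
    then show "y \<in> f ` {x. N (x - c) \<le> \<rho>}"
      using y iso[OF x(1) c] by auto
  qed
qed

lemma N_square_add_eq:
  assumes "N x \<le> r" "r * r < N a"
  shows "N (x\<^sup>2 + a) = N a"
proof -
  have "N (x * x) < N a"
    using N_mult_le[OF assms(1) assms(1)] assms(2) by linarith
  then show ?thesis
    by (intro N_add_eq_of_less) (simp add: power2_eq_square)
qed

lemma isometric_on_small_ball: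
  assumes x: "N x \<le> r" and z: "N z \<le> r" and ra: "r * r < N a"
  shows "N (a * x / (x\<^sup>2 + a) - a * z / (z\<^sup>2 + a)) = N (x - z)"
proof -
  have Na: "N a \<noteq> 0"
    using ra zero_le_square[of r] by linarith
  have hx: "N (x\<^sup>2 + a) = N a" and hz: "N (z\<^sup>2 + a) = N a"
    using N_square_add_eq x z ra by blast+
  have "N (- (x * z)) < N a"
    using N_mult_le[OF x z] ra by (simp add: N_minus)
  then have "N (- (x * z) + a) = N a"
    by (rule N_add_eq_of_less)
  then have hxz: "N (a - x * z) = N a"
    by simp
  have "x\<^sup>2 + a \<noteq> 0" "z\<^sup>2 + a \<noteq> 0"
    using hx hz Na N_zero by auto
  then have "a * x / (x\<^sup>2 + a) - a * z / (z\<^sup>2 + a) = a * (x - z) * (a - x * z) / ((x\<^sup>2 + a) * (z\<^sup>2 + a))"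
    by (simp add: divide_simps) (simp add: algebra_simps power2_eq_square)
  then show ?thesis
    using Na by (simp add: N_divide N_mult hx hz hxz)
qed

lemma maps_small_ball_to_itself:
  assumes "N x \<le> r" "r * r < N a"
  shows "N (a * x / (x\<^sup>2 + a)) \<le> r"
proof -
  have "0 \<le> r"
    using assms(1) N_nonneg[of x] by linarith
  then show ?thesis
    using isometric_on_small_ball[OF assms(1) _ assms(2), of 0] assms(1) by (simp add: N_zero)
qed

definition N_cauchy :: "(nat \<Rightarrow> 'a) \<Rightarrow> bool" where
  "N_cauchy X \<longleftrightarrow> (\<forall>e>0. \<exists>M. \<forall>m\<ge>M. \<forall>n\<ge>M. N (X m - X n) < e)"

definition N_tendsto :: "(nat \<Rightarrow> 'a) \<Rightarrow> 'a \<Rightarrow> bool" where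
  "N_tendsto X L \<longleftrightarrow> (\<forall>e>0. \<exists>M. \<forall>n\<ge>M. N (X n - L) < e)"

lemma N_dist_le_if_geometric_steps:
  assumes steps: "\<And>n. N (X (Suc n) - X n) \<le> k ^ n * D" and k: "0 \<le> k" "k \<le> 1" and D: "0 \<le> D"
  shows "N (X (n + d) - X n) \<le> k ^ n * D"
proof (induction d)
  case 0
  then show ?case using N_zero D k by simp
next
  case (Suc d)
  have "N (X (n + Suc d) - X n) \<le> max (N (X (Suc (n + d)) - X (n + d))) (N (X (n + d) - X n))"
    using N_add_le_max[of "X (Suc (n + d)) - X (n + d)" "X (n + d) - X n"] by simp
  moreover have "k ^ (n + d) * D \<le> k ^ n * D"
    using k D by (simp add: mult_right_mono power_decreasing)
  ultimately show ?case
    using steps[of "n + d"] Suc by simp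
qed

lemma N_cauchy_if_geometric_steps:
  assumes steps: "\<And>n. N (X (Suc n) - X n) \<le> k ^ n * D" and k: "0 \<le> k" "k < 1"
  shows "N_cauchy X"
proof -
  have D: "D \<ge> 0"
    using steps[of 0] N_nonneg[of "X 1 - X 0"] by simp
  show ?thesis
    unfolding N_cauchy_def
  proof (intro allI impI)
    fix e :: real
    assume e: "e > 0"
    obtain M where M: "k ^ M < e / (D + 1)"
      using real_arch_pow_inv[of "e / (D + 1)" k] e D k by fastforce
    have close: "N (X m - X n) < e" if "M \<le> n" "n \<le> m" for m n
    proof -
      have "N (X m - X n) \<le> k ^ n * D"
        using N_dist_le_if_geometric_steps[OF steps _ _ D, of n "m - n"] k that by simp
      also have "\<dots> \<le> k ^ M * (D + 1)"
        using k D that by (intro mult_mono power_decreasing) auto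
      also have "\<dots> < e"
        using M D by (simp add: pos_less_divide_eq)
      finally show ?thesis .
    qed
    show "\<exists>M. \<forall>m\<ge>M. \<forall>n\<ge>M. N (X m - X n) < e"
      using close N_diff_commute by (metis nat_le_linear)
  qed
qed

lemma N_tendsto_le:
  assumes "N_tendsto X L" and "\<And>n. N (X n) \<le> r"
  shows "N L \<le> r"
proof (rule ccontr)
  assume "\<not> N L \<le> r"
  moreover have "r \<ge> 0"
    using assms(2)[of 0] N_nonneg[of "X 0"] by simp
  ultimately obtain M where "N (X M - L) < N L" and "N (X M) < N L"
    using assms unfolding N_tendsto_def by (metis less_le_trans not_le order_refl)
  moreover have "N L \<le> max (N (X M)) (N (- (X M - L)))"
    using N_add_le_max[of "X M" "- (X M - L)"] by simp
  ultimately show False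
    using N_diff_commute[of "X M" L] by (simp add: N_minus)
qed

lemma N_tendsto_fixpoint:
  assumes lim: "N_tendsto X L" and iter: "\<And>n. X (Suc n) = T (X n)"
    and nonexpanding: "\<And>n. N (T L - T (X n)) \<le> N (L - X n)"
  shows "T L = L"
proof (rule ccontr)
  assume "T L \<noteq> L"
  then have d: "N (T L - L) > 0"
    using N_eq_0_iff N_nonneg by (metis eq_iff_diff_eq_0 order_le_less)
  then obtain M where M: "\<forall>n\<ge>M. N (X n - L) < N (T L - L)"
    using lim unfolding N_tendsto_def by blast
  have "N (T L - T (X M)) < N (T L - L)"
    using nonexpanding[of M] M N_diff_commute[of L "X M"] by force
  moreover have "N (X (Suc M) - L) < N (T L - L)"
    using M by simp
  moreover have "N (T L - L) \<le> max (N (T L - T (X M))) (N (X (Suc M) - L))"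
    using N_add_le_max[of "T L - T (X M)" "X (Suc M) - L"] iter[of M] by simp
  ultimately show False
    by simp
qed

end

locale complete_nonarch_abs = nonarch_abs +
  assumes N_complete: "N_cauchy X \<Longrightarrow> \<exists>L. N_tendsto X L"
begin

lemma contraction_fixpoint_cball:
  assumes maps_to: "\<And>u. N u \<le> r \<Longrightarrow> N (T u) \<le> r"
    and contraction: "\<And>u v. N u \<le> r \<Longrightarrow> N v \<le> r \<Longrightarrow> N (T u - T v) \<le> k * N (u - v)"
    and k: "0 \<le> k" "k < 1" and r: "0 \<le> r"
  shows "\<exists>x. N x \<le> r \<and> T x = x"
proof -
  define X where "X n = (T ^^ n) 0" for n
  have iter: "X (Suc n) = T (X n)" for n
    by (simp add: X_def)
  have in_ball: "N (X n) \<le> r" for n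
    by (induction n) (simp_all add: X_def N_zero r maps_to)
  have "N (X (Suc n) - X n) \<le> k ^ n * N (X 1 - X 0)" for n
  proof (induction n)
    case (Suc n)
    have "N (X (Suc (Suc n)) - X (Suc n)) \<le> k * N (X (Suc n) - X n)"
      using contraction[OF in_ball[of "Suc n"] in_ball[of n]] by (simp only: iter)
    also have "\<dots> \<le> k * (k ^ n * N (X 1 - X 0))"
      using Suc k by (simp add: mult_left_mono)
    finally show ?case by simp
  qed simp
  then have "N_cauchy X"
    using N_cauchy_if_geometric_steps k by blast
  then obtain L where lim: "N_tendsto X L"
    using N_complete by blast
  have L: "N L \<le> r"
    using N_tendsto_le[OF lim in_ball] .
  have nonexpanding: "N (T L - T (X n)) \<le> N (L - X n)" for n
  proof -
    have "k * N (L - X n) \<le> N (L - X n)"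
      using k N_nonneg by (simp add: mult_left_le_one_le)
    then show ?thesis
      using contraction[OF L in_ball[of n]] by linarith
  qed
  have "T L = L"
    using N_tendsto_fixpoint[of X L T] lim iter nonexpanding by blast
  with L show ?thesis by blast
qed

lemma onto_small_ball:
  assumes y: "N y \<le> r" and ra: "r * r < N a"
  shows "\<exists>x. N x \<le> r \<and> a * x / (x\<^sup>2 + a) = y"
proof -
  have A: "N a > 0"
    using ra zero_le_square[of r] by linarith
  then have a: "a \<noteq> 0"
    using N_zero by auto
  have r: "0 \<le> r"
    using y N_nonneg[of y] by linarith
  define T where "T x = y + y * x\<^sup>2 / a" for x
  have maps_to: "N (T u) \<le> r" if u: "N u \<le> r" for u
  proof -
    have "N (y * (u * u)) \<le> r * (r * r)"
      using N_mult_le[OF y N_mult_le[OF u u]] .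
    also have "\<dots> \<le> r * N a"
      using ra r by (simp add: mult_left_mono)
    finally have "N (y * u\<^sup>2 / a) \<le> r"
      using A by (simp add: N_divide power2_eq_square pos_divide_le_eq)
    then show ?thesis
      using N_add_le_max[of y "y * u\<^sup>2 / a"] y by (simp add: T_def)
  qed
  have contraction: "N (T u - T v) \<le> r * r / N a * N (u - v)" if "N u \<le> r" "N v \<le> r" for u v
  proof -
    have "T u - T v = y * (u + v) * (u - v) / a"
      by (simp add: T_def divide_simps) (simp add: algebra_simps power2_eq_square)
    then have "N (T u - T v) = N (y * (u + v)) * N (u - v) / N a"
      by (simp add: N_divide N_mult)
    moreover have "N (y * (u + v)) \<le> r * r"
      using N_add_le_max[of u v] that by (intro N_mult_le[OF y]) simp
    ultimately show ?thesis
      using A N_nonneg[of "u - v"] by (simp add: divide_right_mono mult_right_mono)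
  qed
  have "0 \<le> r * r / N a" "r * r / N a < 1"
    using A ra by simp_all
  then obtain x where x: "N x \<le> r" "T x = x"
    using contraction_fixpoint_cball[OF maps_to contraction _ _ r] by blast
  have "x\<^sup>2 + a \<noteq> 0"
    using N_square_add_eq[OF x(1) ra] A N_zero by auto
  then have "a * x / (x\<^sup>2 + a) = y"
    using x(2) a by (simp add: T_def field_simps)
  with x(1) show ?thesis by blast
qed

end

lemma complete_nonarch_abs_if_padic_field:
  assumes "is_padic_field p N"
  shows "complete_nonarch_abs N"
proof -
  have "nonarch_abs N"
    using assms unfolding is_padic_field_def nonarch_abs_def by blast
  then interpret nonarch_abs N .
  show ?thesis
    by unfold_locales (use assms in \<open>simp add: is_padic_field_def N_cauchy_def N_tendsto_def\<close>)
qed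

theorem lemma3p2:
  fixes p :: nat and N :: "'a::field_char_0 \<Rightarrow> real" and a c :: 'a and r \<rho> :: real
  assumes "prime p" and "is_padic_field p N"
    and "a \<noteq> 0" and "\<exists>s. s * s = - a"
    and "0 < r" and "r < sqrt (N a)"
    and "{x. N (x - c) \<le> \<rho>} \<subseteq> {x. N x = r}"
  shows "(\<lambda>x. a * x / (x\<^sup>2 + a)) ` {x. N (x - c) \<le> \<rho>}
           = {y. N (y - a * c / (c\<^sup>2 + a)) \<le> \<rho>}"
proof -
  interpret complete_nonarch_abs N
    using complete_nonarch_abs_if_padic_field assms(2) .
  have ra: "r * r < N a"
    using assms(5,6) real_sqrt_less_iff[of "r * r" "N a"] by simp
  show ?thesis
  proof (cases "\<rho> < 0")
    case True
    then have "\<not> N x \<le> \<rho>" for x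
      using N_nonneg[of x] by linarith
    then show ?thesis
      by simp
  next
    case False
    then have "c \<in> {x. N (x - c) \<le> \<rho>}"
      using N_zero by simp
    then have "N c = r"
      using assms(7) by blast
    moreover have "\<rho> < r"
    proof (rule ccontr)
      assume "\<not> \<rho> < r"
      then have "0 \<in> {x. N (x - c) \<le> \<rho>}"
        using \<open>N c = r\<close> N_minus[of c] by simp
      then have "N 0 = r"
        using assms(7) by blast
      then show False
        using assms(5) N_zero by simp
    qed
    ultimately show ?thesis
      using isometry_onto_image_ball[where f = "\<lambda>x. a * x / (x\<^sup>2 + a)",
          OF maps_small_ball_to_itself[OF _ ra] onto_small_ball[OF _ ra]
          isometric_on_small_ball[OF _ _ ra]]
      by simp
  qed
qed

end
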